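(* Fix $n$, $\mu_n>0$ and $t\in\mathbb R$, and for $\delta\in\mathbb R$ let $\theta_n(\delta)=-(t+\delta)/n^{1/2}$. Then $$\lim_{\delta\downarrow0}\big|F_{A,n,\theta_n(-\delta)}(t)-F_{A,n,\theta_n(\delta)}(t)\big|=\Phi(t+n^{1/2}\mu_n)-\Phi(t-n^{1/2}\mu_n).$$
   Context: Gaussian location model: for each sample size $n$, $y_1,\dots,y_n$ are i.i.d. $N(\theta,1)$ with $\theta\in\mathbb R$ unknown; $\bar y$ is their mean. $P_{n,\theta}$ denotes the probability governing a sample of size $n$ when $\theta$ is the true parameter. Given a nonrandom tuning parameter $\mu_n>0$, the adaptive LASSO estimator is $\hat\theta_A=0$ if $|\bar y|\le\mu_n$ and $\hat\theta_A=\bar y-\mu_n^2/\bar y$ if $|\bar y|>\mu_n$. $F_{A,n,\theta}$ denotes the cdf of $n^{1/2}(\hat\theta_A-\theta)$ under $P_{n,\theta}$. $\Phi$ is the standard normal cdf. *)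

theory Defs
  imports "HOL-Probability.Probability"
begin

definition Phi :: "real \<Rightarrow> real" where
  "Phi x = measure (density lborel std_normal_density) {..x}"

definition sample_measure :: "nat \<Rightarrow> real \<Rightarrow> (nat \<Rightarrow> real) measure" where
  "sample_measure n \<theta> = PiM {..<n} (\<lambda>_. density lborel (normal_density \<theta> 1))"

definition ybar :: "nat \<Rightarrow> (nat \<Rightarrow> real) \<Rightarrow> real" where
  "ybar n y = (\<Sum>i<n. y i) / real n"

(* adaptive LASSO estimator as function of the sample mean and tuning parameter mu *)
definition adaLASSO :: "real \<Rightarrow> real \<Rightarrow> real" where
  "adaLASSO mu yb = (if \<bar>yb\<bar> \<le> mu then 0 else yb - mu\<^sup>2 / yb)"

definition F_A :: "nat \<Rightarrow> real \<Rightarrow> real \<Rightarrow> real \<Rightarrow> real" where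
  "F_A n mu \<theta> t = measure (sample_measure n \<theta>)
     {y \<in> space (sample_measure n \<theta>). sqrt (real n) * (adaLASSO mu (ybar n y) - \<theta>) \<le> t}"

end

theory Submission
  imports Defs
begin

(* The estimator is a monotone function of the sample mean ybar, which under P_{n,theta} is
   N(theta, 1/n).  Hence for every level a <> 0 the event {adaLASSO mu ybar <= a} is a half-line
   {ybar <= c}, where c is the root of  c - mu^2/c = a  lying outside [-mu, mu]; for a > 0 this
   root is  ada_threshold mu a = (a + sqrt (a^2 + 4 mu^2)) / 2, and by oddness of the estimator
   the level -a corresponds to -ada_threshold mu a.  Consequently
     F_A(theta_n(-d)) = Phi (t - d + sqrt n * c_d),   F_A(theta_n(d)) = Phi (t + d - sqrt n * c_d)
   with c_d = ada_threshold mu (d / sqrt n), and since c_d -> mu as d -> 0+ and Phi is continuous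
   and monotone, the absolute difference tends to Phi (t + sqrt n mu) - Phi (t - sqrt n mu). *)

(* Phi is the distribution function of a (diffuse) probability law on the line, hence
   continuous and monotone. *)
lemma std_normal_real_distribution: "real_distribution std_normal_distribution"
  using prob_space_normal_density by (auto simp: real_distribution_def real_distribution_axioms_def)

lemma Phi_eq_cdf: "Phi = cdf std_normal_distribution"
  by (auto simp: Phi_def cdf_def)

lemma isCont_Phi: "isCont Phi x"
proof -
  interpret real_distribution std_normal_distribution
    by (rule std_normal_real_distribution)
  have "measure std_normal_distribution {x} = 0"
    by (simp add: measure_def emeasure_density nn_integral_null_set)
  then show ?thesis unfolding Phi_eq_cdf by (simp add: isCont_cdf)
qed

lemma Phi_mono: "x \<le> y \<Longrightarrow> Phi x \<le> Phi y"
  unfolding Phi_eq_cdf using std_normal_real_distribution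
  by (simp add: real_distribution_def finite_borel_measure.cdf_nondecreasing
        real_distribution.finite_borel_measure_M)

lemma indep_vars_PiM_coordinates:
  assumes I: "I \<noteq> {}" and M: "\<And>i. i \<in> I \<Longrightarrow> prob_space (M i)"
  shows "prob_space.indep_vars (PiM I M) M (\<lambda>i x. x i) I"
proof -
  interpret P: prob_space "PiM I M" using M by (rule prob_space_PiM)
  have restrict_id: "distr (PiM I M) (PiM I M) (\<lambda>x. \<lambda>i\<in>I. x i) = PiM I M"
  proof -
    have "distr (PiM I M) (PiM I M) (\<lambda>x. \<lambda>i\<in>I. x i) = distr (PiM I M) (PiM I M) (\<lambda>x. x)"
      by (rule distr_cong) (auto simp: space_PiM PiE_def extensional_def restrict_def)
    then show ?thesis by simp
  qed
  have marginals: "(\<Pi>\<^sub>M i\<in>I. distr (PiM I M) (M i) (\<lambda>x. x i)) = PiM I M"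
    by (rule PiM_cong) (simp_all add: distr_PiM_component M)
  show ?thesis
    using restrict_id marginals by (subst P.indep_vars_iff_distr_eq_PiM') (simp_all add: I)
qed

(* Under P_{n,theta} the sample mean is N(theta, 1/n): a sum of independent normals is normal,
   and normality is preserved by scaling. *)
lemma sample_mean_normal:
  assumes n: "n > 0"
  shows "distributed (sample_measure n \<theta>) lborel (ybar n) (normal_density \<theta> (1 / sqrt (real n)))"
proof -
  define N where "N = density lborel (normal_density \<theta> 1)"
  have N: "prob_space N" unfolding N_def by (rule prob_space_normal_density) simp
  have M: "sample_measure n \<theta> = PiM {..<n} (\<lambda>_. N)"
    by (simp add: sample_measure_def N_def)
  interpret prob_space "sample_measure n \<theta>"
    unfolding M by (rule prob_space_PiM) (rule N)
  have "indep_vars (\<lambda>_. N) (\<lambda>i y. y i) {..<n}"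
    unfolding M by (rule indep_vars_PiM_coordinates) (use n N in auto)
  then have indep: "indep_vars (\<lambda>_. borel) (\<lambda>i y. y i) {..<n}"
    by (rule indep_vars_compose2[where Y="\<lambda>_ x. x"]) (simp add: N_def)
  have coord: "distributed (sample_measure n \<theta>) lborel (\<lambda>y. y i) (normal_density \<theta> 1)"
    if "i \<in> {..<n}" for i
  proof -
    have "distr (sample_measure n \<theta>) lborel (\<lambda>y. y i) = distr (PiM {..<n} (\<lambda>_. N)) N (\<lambda>y. y i)"
      unfolding M by (rule distr_cong) (simp_all add: N_def)
    also have "\<dots> = N" by (rule distr_PiM_component) (use N that in auto)
    finally show ?thesis
      using that by (auto simp: distributed_def N_def M)
  qed
  have "distributed (sample_measure n \<theta>) lborel (\<lambda>y. \<Sum>i<n. y i)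
      (normal_density (\<Sum>i<n. \<theta>) (sqrt (\<Sum>i<n. 1\<^sup>2)))"
    by (rule sum_indep_normal[OF _ _ indep]) (use n coord in auto)
  then have "distributed (sample_measure n \<theta>) lborel (\<lambda>y. 0 + (1 / real n) * (\<Sum>i<n. y i))
      (normal_density (0 + (1 / real n) * (real n * \<theta>)) (\<bar>1 / real n\<bar> * sqrt (real n)))"
    by (intro normal_density_affine) (use n in auto)
  moreover have "\<bar>1 / real n\<bar> * sqrt (real n) = 1 / sqrt (real n)"
    using n by (simp add: field_simps real_sqrt_divide)
  ultimately show ?thesis
    using n by (simp add: ybar_def[abs_def])
qed

(* Standardising the sample mean expresses its cdf through Phi. *)
lemma sample_mean_cdf:
  assumes n: "n > 0"
  shows "measure (sample_measure n \<theta>) {y \<in> space (sample_measure n \<theta>). ybar n y \<le> c}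
       = Phi (sqrt (real n) * (c - \<theta>))"
proof -
  let ?M = "sample_measure n \<theta>" and ?u = "sqrt (real n)"
  define Z where "Z y = - ?u * \<theta> + ?u * ybar n y" for y
  interpret prob_space ?M
    unfolding sample_measure_def by (rule prob_space_PiM) (simp add: prob_space_normal_density)
  have u: "?u > 0" using n by simp
  have "distributed ?M lborel Z (normal_density (- ?u * \<theta> + ?u * \<theta>) (\<bar>?u\<bar> * (1 / ?u)))"
    unfolding Z_def by (rule normal_density_affine[OF sample_mean_normal[OF n]]) (use u in auto)
  then have Z_std: "distributed ?M lborel Z std_normal_density"
    using u by simp
  then have Z_meas: "Z \<in> borel_measurable ?M" and Z_distr: "distr ?M lborel Z = std_normal_distribution"
    by (auto simp: distributed_def)
  have "{y \<in> space ?M. ybar n y \<le> c} = Z -` {..?u * (c - \<theta>)} \<inter> space ?M"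
    using u by (auto simp: Z_def algebra_simps)
  also have "measure ?M \<dots> = measure (distr ?M lborel Z) {..?u * (c - \<theta>)}"
    using Z_meas by (simp add: measure_distr)
  also have "\<dots> = Phi (?u * (c - \<theta>))"
    by (simp add: Z_distr Phi_def)
  finally show ?thesis .
qed

(* For a > 0, the unique point c > mu where the estimator takes the value a, i.e. the positive
   root of c^2 - a c - mu^2 = 0. *)
definition ada_threshold :: "real \<Rightarrow> real \<Rightarrow> real" where
  "ada_threshold mu a = (a + sqrt (a\<^sup>2 + 4 * mu\<^sup>2)) / 2"

lemma adaLASSO_odd: "adaLASSO mu (- x) = - adaLASSO mu x"
  by (simp add: adaLASSO_def)

lemma adaLASSO_nonpos:
  assumes "mu \<ge> 0" and "x \<le> mu"
  shows "adaLASSO mu x \<le> 0"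
proof (cases "\<bar>x\<bar> \<le> mu")
  case False
  with assms have x: "x < - mu" by auto
  then have "mu * mu \<le> (- x) * (- x)"
    using assms(1) by (intro mult_mono) auto
  then have "mu\<^sup>2 \<le> x * x"
    by (simp add: power2_eq_square)
  then have "x \<le> mu\<^sup>2 / x"
    using x assms(1) by (simp add: le_divide_eq)
  then show ?thesis using False by (simp add: adaLASSO_def)
qed (simp add: adaLASSO_def)

lemma shrinkage_strict_mono: "strict_mono_on {0<..} (\<lambda>x::real. x - mu\<^sup>2 / x)"
proof (rule strict_mono_onI)
  fix x y :: real assume "x \<in> {0<..}" "y \<in> {0<..}" "x < y"
  then have "mu\<^sup>2 / y \<le> mu\<^sup>2 / x"
    by (intro divide_left_mono) auto
  with \<open>x < y\<close> show "x - mu\<^sup>2 / x < y - mu\<^sup>2 / y" by simp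
qed

lemma ada_threshold_root:
  assumes mu: "mu > 0" and a: "a > 0"
  shows "mu < ada_threshold mu a" and "ada_threshold mu a - mu\<^sup>2 / ada_threshold mu a = a"
proof -
  define s where "s = sqrt (a\<^sup>2 + 4 * mu\<^sup>2)"
  define c where "c = ada_threshold mu a"
  have c: "c = (a + s) / 2" by (simp add: c_def s_def ada_threshold_def)
  have s2: "s\<^sup>2 = a\<^sup>2 + 4 * mu\<^sup>2" by (simp add: s_def)
  have "2 * mu = sqrt (4 * mu\<^sup>2)"
    using mu by (simp add: real_sqrt_mult)
  also have "\<dots> < s"
    unfolding s_def using a by (intro real_sqrt_less_mono) simp
  finally show "mu < c" using a c by simp
  then have c_pos: "c > 0" using mu by simp
  have "c\<^sup>2 - mu\<^sup>2 = a * c"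
    using s2 unfolding c by (simp add: power2_eq_square field_simps)
  then show "c - mu\<^sup>2 / c = a"
    using c_pos by (simp add: field_simps power2_eq_square)
qed

(* For a > 0 the sub-level sets {adaLASSO mu x <= a} and {adaLASSO mu x < a} are the
   half-lines cut at ada_threshold mu a; the strict version yields the negative levels. *)
lemma adaLASSO_below_threshold:
  assumes mu: "mu > 0" and a: "a > 0"
  shows "adaLASSO mu x \<le> a \<longleftrightarrow> x \<le> ada_threshold mu a"
    and "adaLASSO mu x < a \<longleftrightarrow> x < ada_threshold mu a"
proof -
  define c where "c = ada_threshold mu a"
  note root = ada_threshold_root[OF mu a, folded c_def]
  have "(adaLASSO mu x \<le> a \<longleftrightarrow> x \<le> c) \<and> (adaLASSO mu x < a \<longleftrightarrow> x < c)"
  proof (cases "x \<le> mu")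
    case True
    then show ?thesis using adaLASSO_nonpos[of mu x] mu a root(1) by auto
  next
    case False
    then have x_pos: "x \<in> {0<..}" and c_pos: "c \<in> {0<..}" using mu root(1) by auto
    have "adaLASSO mu x = x - mu\<^sup>2 / x"
      using False mu by (simp add: adaLASSO_def)
    then show ?thesis
      using strict_mono_on_less_eq[OF shrinkage_strict_mono[of mu] x_pos c_pos]
        strict_mono_on_less[OF shrinkage_strict_mono[of mu] x_pos c_pos] root(2) by simp
  qed
  then show "adaLASSO mu x \<le> a \<longleftrightarrow> x \<le> c" and "adaLASSO mu x < a \<longleftrightarrow> x < c" by auto
qed

lemma adaLASSO_below_neg_threshold:
  assumes "mu > 0" and "a > 0"
  shows "adaLASSO mu x \<le> - a \<longleftrightarrow> x \<le> - ada_threshold mu a"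
  using adaLASSO_below_threshold(2)[OF assms, of "- x"] by (auto simp: adaLASSO_odd)

lemma F_A_eq_Phi:
  assumes n: "n > 0"
    and level: "\<And>x. adaLASSO mu x \<le> \<theta> + t / sqrt (real n) \<longleftrightarrow> x \<le> c"
  shows "F_A n mu \<theta> t = Phi (sqrt (real n) * (c - \<theta>))"
proof -
  have u: "sqrt (real n) > 0" using n by simp
  have "sqrt (real n) * (A - \<theta>) \<le> t \<longleftrightarrow> A \<le> \<theta> + t / sqrt (real n)" for A
    using u by (simp add: field_simps)
  then have "sqrt (real n) * (adaLASSO mu x - \<theta>) \<le> t \<longleftrightarrow> x \<le> c" for x
    using level by simp
  then show ?thesis
    unfolding F_A_def using sample_mean_cdf[OF n] by simp
qed

lemma F_A_local_alternatives:
  assumes n: "n > 0" and mu: "mu > 0" and \<delta>: "\<delta> > 0"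
  defines "c \<equiv> ada_threshold mu (\<delta> / sqrt (real n))"
  shows "F_A n mu (- (t + - \<delta>) / sqrt (real n)) t = Phi (t - \<delta> + sqrt (real n) * c)"
    and "F_A n mu (- (t + \<delta>) / sqrt (real n)) t = Phi (t + \<delta> - sqrt (real n) * c)"
proof -
  have u: "sqrt (real n) > 0" using n by simp
  then have a: "\<delta> / sqrt (real n) > 0" using \<delta> by simp
  have "- (t + - \<delta>) / sqrt (real n) + t / sqrt (real n) = \<delta> / sqrt (real n)"
    using u by (simp add: field_simps)
  then have "F_A n mu (- (t + - \<delta>) / sqrt (real n)) t
      = Phi (sqrt (real n) * (c - - (t + - \<delta>) / sqrt (real n)))"
    using adaLASSO_below_threshold(1)[OF mu a] unfolding c_def by (intro F_A_eq_Phi n) simp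
  also have "sqrt (real n) * (c - - (t + - \<delta>) / sqrt (real n)) = t - \<delta> + sqrt (real n) * c"
    using u by (simp add: right_diff_distrib diff_divide_distrib)
  finally show "F_A n mu (- (t + - \<delta>) / sqrt (real n)) t = Phi (t - \<delta> + sqrt (real n) * c)" .
  have "- (t + \<delta>) / sqrt (real n) + t / sqrt (real n) = - (\<delta> / sqrt (real n))"
    using u by (simp add: field_simps)
  then have "F_A n mu (- (t + \<delta>) / sqrt (real n)) t
      = Phi (sqrt (real n) * (- c - - (t + \<delta>) / sqrt (real n)))"
    using adaLASSO_below_neg_threshold[OF mu a] unfolding c_def by (intro F_A_eq_Phi n) simp
  also have "sqrt (real n) * (- c - - (t + \<delta>) / sqrt (real n)) = t + \<delta> - sqrt (real n) * c"
    using u by (simp add: right_diff_distrib diff_divide_distrib)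
  finally show "F_A n mu (- (t + \<delta>) / sqrt (real n)) t = Phi (t + \<delta> - sqrt (real n) * c)" .
qed

lemma isCont_ada_threshold: "isCont (ada_threshold mu) a"
  unfolding ada_threshold_def by (intro continuous_intros) simp

lemma ada_threshold_zero: "mu \<ge> 0 \<Longrightarrow> ada_threshold mu 0 = mu"
  by (simp add: ada_threshold_def real_sqrt_mult)

(* Main result: pass to the limit d -> 0+ in the closed forms; the limit is nonnegative since
   Phi is monotone, so the absolute value disappears. *)
theorem mainTheorem10:
  fixes n :: nat and mu t :: real and theta_n :: "real \<Rightarrow> real"
  assumes "n > 0" and "mu > 0"
    and "\<And>\<delta>. theta_n \<delta> = - (t + \<delta>) / sqrt (real n)"
  shows "((\<lambda>\<delta>. \<bar>F_A n mu (theta_n (- \<delta>)) t - F_A n mu (theta_n \<delta>) t\<bar>)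
           \<longlongrightarrow> Phi (t + sqrt (real n) * mu) - Phi (t - sqrt (real n) * mu)) (at_right 0)"
proof -
  define u where "u = sqrt (real n)"
  define c where "c \<delta> = ada_threshold mu (\<delta> / u)" for \<delta>
  have "(c \<longlongrightarrow> ada_threshold mu (0 / u)) (at_right 0)"
    unfolding c_def
    by (intro isCont_tendsto_compose[OF isCont_ada_threshold] tendsto_intros tendsto_ident_at)
      (simp add: u_def assms(1))
  then have "(c \<longlongrightarrow> mu) (at_right 0)"
    using assms(2) by (simp add: ada_threshold_zero)
  then have "((\<lambda>\<delta>. \<bar>Phi (t - \<delta> + u * c \<delta>) - Phi (t + \<delta> - u * c \<delta>)\<bar>)
      \<longlongrightarrow> \<bar>Phi (t - 0 + u * mu) - Phi (t + 0 - u * mu)\<bar>) (at_right 0)"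
    by (intro tendsto_intros isCont_tendsto_compose[OF isCont_Phi] tendsto_ident_at)
  moreover have "\<forall>\<^sub>F \<delta> in at_right 0. \<bar>Phi (t - \<delta> + u * c \<delta>) - Phi (t + \<delta> - u * c \<delta>)\<bar>
      = \<bar>F_A n mu (theta_n (- \<delta>)) t - F_A n mu (theta_n \<delta>) t\<bar>"
    using eventually_at_right_less[of 0]
    by eventually_elim (simp only: assms(3) F_A_local_alternatives[OF assms(1,2)] c_def u_def)
  moreover have "Phi (t - u * mu) \<le> Phi (t + u * mu)"
    using assms(2) by (intro Phi_mono) (simp add: u_def)
  ultimately show ?thesis
    by (simp add: tendsto_cong u_def)
qed

end
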